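(* Let $f:\mathbb{R}^{M}\times\Theta\to\mathbb{R}^N$ (with $N\ge1$) be a network built from $L$ linear layers as follows: $\mathbf{x}^1=\mathbf{x}$, $\mathbf{x}^{l+1}=\sigma_l(\mathbf{W}_l\mathbf{x}^l;\boldsymbol{\beta}_l)$ for $l=1,\dots,L-1$, and $f(\mathbf{x};\boldsymbol{\theta})=\sigma_L(\mathbf{W}_L\mathbf{x}^L;\boldsymbol{\beta}_L)$, where $\mathbf{W}_l$ are weight matrices, $\sigma_l$ are differentiable maps possibly with extra parameters $\boldsymbol{\beta}_l$, and $\boldsymbol{\theta}=(\mathbf{W}_1,\boldsymbol{\beta}_1,\dots,\mathbf{W}_L,\boldsymbol{\beta}_L)$; $f$ is assumed twice differentiable in $\boldsymbol{\theta}$. For each $l$ let $f^l$ denote the map from the input $\mathbf{x}^l$ of the $l$-th linear layer to the network output (with parameters fixed). Let $(\mathbf{x}_i,\mathbf{y}_i)_{i=1}^n$ be training data, let $\mathbf{x}_i^l$ be the input to the $l$-th linear layer when the network input is $\mathbf{x}_i$, and assume all $\mathbf{x}_i^l\ne0$. Let $\boldsymbol{\theta}^*$ be an exact interpolation solution ($f(\mathbf{x}_i;\boldsymbol{\theta}^* )=\mathbf{y}_i$ for all $i$). Then $$\sum_{l=1}^L dV_{f^l}\le \frac{N^{-N/2}}{n}\sum_{l=1}^L\sum_{i=1}^n\|J_{f^l}(\mathbf{x}_i^l)\|_F^N\le \frac1n\sqrt{\sum_{l=1}^L\sum_{i=1}^n\frac{\|\mathbf{W}_l\|_2^{2N}}{\|\mathbf{x}_i^l\|_2^{2N}}}\cdot\left(\frac{n\,S(\boldsymbol{\theta}^*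 )}{N}\right)^{N/2}.$$
   Context: The loss is $L(\boldsymbol{\theta})=\frac1n\sum_{i=1}^n\frac12\|f(\mathbf{x}_i;\boldsymbol{\theta})-\mathbf{y}_i\|_2^2$ and the sharpness is $S(\boldsymbol{\theta})=\operatorname{Tr}(\nabla^2_{\boldsymbol{\theta}}L(\boldsymbol{\theta}))$. $J_{f^l}(\mathbf{x}^l)$ is the Jacobian ($N$ rows) of $f^l$ at $\mathbf{x}^l$ with parameters $\boldsymbol{\theta}^*$. The local volumetric ratio of $f^l$ at $\mathbf{x}^l$ is $\sqrt{\det(J_{f^l}(\mathbf{x}^l)J_{f^l}(\mathbf{x}^l)^T)}$, and $dV_{f^l}=\frac1n\sum_{i=1}^n\sqrt{\det(J_{f^l}(\mathbf{x}_i^l)J_{f^l}(\mathbf{x}_i^l)^T)}$; the sum $\sum_l dV_{f^l}$ is the Network Volumetric Ratio. $\|\cdot\|_2$ is the Euclidean/spectral norm and $\|\cdot\|_F$ the Frobenius norm. *)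

theory Defs
  imports "HOL-Analysis.Derivative" "Jordan_Normal_Form.Determinant"
begin

text \<open>A vector of R^a is a function nat => real of which only the
coordinates j < a are relevant; a real (k x a)-matrix is a function
nat => nat => real of which only entries (i,j) with i < k, j < a are relevant.
More generally we use vectors indexed by an arbitrary finite index set I.\<close>

text \<open>The parameter vector theta = (W_1, beta_1, ..., W_L, beta_L) is one vector
indexed by the parameter names: Wp l i j is entry (i,j) of W_l, Bp l k is the
k-th entry of beta_l.\<close>

datatype param = Wp nat nat nat | Bp nat nat

definition params :: "nat \<Rightarrow> (nat \<Rightarrow> nat) \<Rightarrow> (nat \<Rightarrow> nat) \<Rightarrow> (nat \<Rightarrow> nat) \<Rightarrow> param set" where
  "params L m d q =
     {Wp l i j | l i j. l \<in> {1..L} \<and> i < m l \<and> j < d l} \<union> {Bp l k | l k. l \<in> {1..L} \<and> k < q l}"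

definition Wof :: "(param \<Rightarrow> real) \<Rightarrow> nat \<Rightarrow> nat \<Rightarrow> nat \<Rightarrow> real" where
  "Wof \<theta> l = (\<lambda>i j. \<theta> (Wp l i j))"

definition bof :: "(param \<Rightarrow> real) \<Rightarrow> nat \<Rightarrow> nat \<Rightarrow> real" where
  "bof \<theta> l = (\<lambda>k. \<theta> (Bp l k))"

definition vnorm :: "'i set \<Rightarrow> ('i \<Rightarrow> real) \<Rightarrow> real" where
  "vnorm I x = sqrt (\<Sum>j\<in>I. (x j)^2)"

definition fro :: "'k set \<Rightarrow> 'i set \<Rightarrow> ('k \<Rightarrow> 'i \<Rightarrow> real) \<Rightarrow> real" where
  "fro K I A = sqrt (\<Sum>k\<in>K. \<Sum>j\<in>I. (A k j)^2)"

definition matvec :: "nat \<Rightarrow> nat \<Rightarrow> (nat \<Rightarrow> nat \<Rightarrow> real) \<Rightarrow> (nat \<Rightarrow> real) \<Rightarrow> (nat \<Rightarrow> real)" where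
  "matvec k a A z = (\<lambda>i. if i < k then (\<Sum>j<a. A i j * z j) else 0)"

definition opnorm :: "nat \<Rightarrow> nat \<Rightarrow> (nat \<Rightarrow> nat \<Rightarrow> real) \<Rightarrow> real" where
  "opnorm k a A = Sup ((\<lambda>v. vnorm {..<k} (matvec k a A v)) ` {v. (\<forall>j. a \<le> j \<longrightarrow> v j = 0) \<and> vnorm {..<a} v \<le> 1})"

definition has_fderiv :: "'i set \<Rightarrow> 'k set \<Rightarrow> (('i \<Rightarrow> real) \<Rightarrow> ('k \<Rightarrow> real)) \<Rightarrow> ('i \<Rightarrow> real) \<Rightarrow> ('k \<Rightarrow> 'i \<Rightarrow> real) \<Rightarrow> bool" where
  "has_fderiv I K F x A \<longleftrightarrow>
     (\<forall>\<epsilon>>0. \<exists>\<delta>>0. \<forall>h. (\<forall>j. j \<notin> I \<longrightarrow> h j = 0) \<longrightarrow> vnorm I h < \<delta> \<longrightarrow>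
        vnorm K (\<lambda>k. F (\<lambda>j. x j + h j) k - F x k - (\<Sum>j\<in>I. A k j * h j)) \<le> \<epsilon> * vnorm I h)"

definition twice_fdiff :: "'i set \<Rightarrow> 'k set \<Rightarrow> (('i \<Rightarrow> real) \<Rightarrow> ('k \<Rightarrow> real)) \<Rightarrow> bool" where
  "twice_fdiff I K F \<longleftrightarrow>
     (\<exists>D. (\<forall>x. has_fderiv I K F x (D x)) \<and>
          (\<forall>x. \<exists>H. has_fderiv I (K \<times> I) (\<lambda>y (k, i). D y k i) x H))"

definition jac :: "(('i \<Rightarrow> real) \<Rightarrow> ('k \<Rightarrow> real)) \<Rightarrow> ('i \<Rightarrow> real) \<Rightarrow> 'k \<Rightarrow> 'i \<Rightarrow> real" where
  "jac F z k j = deriv (\<lambda>t. F (z(j := z j + t)) k) 0"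

text \<open>run sigma m d theta l k z: apply the k layers l, l+1, ..., l+k-1 to z, where layer l
is z |-> sigma_l (W_l z; beta_l), W_l an (m_l x d_l)-matrix.\<close>
fun run :: "(nat \<Rightarrow> (nat \<Rightarrow> real) \<Rightarrow> (nat \<Rightarrow> real) \<Rightarrow> (nat \<Rightarrow> real)) \<Rightarrow> (nat \<Rightarrow> nat) \<Rightarrow> (nat \<Rightarrow> nat)
            \<Rightarrow> (param \<Rightarrow> real) \<Rightarrow> nat \<Rightarrow> nat \<Rightarrow> (nat \<Rightarrow> real) \<Rightarrow> (nat \<Rightarrow> real)" where
  "run \<sigma> m d \<theta> l 0 z = z"
| "run \<sigma> m d \<theta> l (Suc k) z =
     run \<sigma> m d \<theta> (Suc l) k (\<sigma> l (matvec (m l) (d l) (Wof \<theta> l) z) (bof \<theta> l))"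

text \<open>The network output f(x; theta), the input x^l of the l-th linear layer,
and the map f^l from x^l to the output.\<close>
definition net where "net \<sigma> m d L \<theta> x = run \<sigma> m d \<theta> 1 L x"
definition layer_in where "layer_in \<sigma> m d \<theta> l x = run \<sigma> m d \<theta> 1 (l - 1) x"
definition f_from where "f_from \<sigma> m d L \<theta> l z = run \<sigma> m d \<theta> l (Suc L - l) z"

text \<open>Training loss and sharpness (trace of the Hessian = sum of the diagonal
second partial derivatives over all parameters).\<close>
definition loss where
  "loss \<sigma> m d L N n xs ys \<theta> =
     (1 / real n) * (\<Sum>i=1..n. (1/2) * (vnorm {..<N} (\<lambda>k. net \<sigma> m d L \<theta> (xs i) k - ys i k))^2)"

definition sharpness where
  "sharpness \<sigma> m d q L N n xs ys \<theta> =
     (\<Sum>p\<in>params L m d q. deriv (deriv (\<lambda>t. loss \<sigma> m d L N n xs ys (\<theta>(p := \<theta> p + t)))) 0)"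

definition volratio :: "nat \<Rightarrow> nat \<Rightarrow> (nat \<Rightarrow> nat \<Rightarrow> real) \<Rightarrow> real" where
  "volratio N a J = sqrt (Determinant.det (Matrix.mat N N (\<lambda>(r, s). \<Sum>j<a. J r j * J s j)))"

definition dV where
  "dV \<sigma> m d L N n xs \<theta> l =
     (1 / real n) * (\<Sum>i=1..n. volratio N (d l)
        (jac (f_from \<sigma> m d L \<theta> l) (layer_in \<sigma> m d \<theta> l (xs i))))"

end

theory Submission
  imports Defs
begin

text \<open>Hadamard's inequality and AM-GM give \<open>sqrt (det (J J^T)) <= N^(-N/2) |J|_F^N\<close>. Moving the
input \<open>x\<close> of layer \<open>l\<close> along \<open>e_j\<close> changes the output exactly as moving \<open>W_l\<close> along
\<open>W_l e_j x^T / |x|^2\<close>; hence the Jacobian of \<open>f^l\<close> factors through the derivative of \<open>f\<close>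
with respect to \<open>W_l\<close>, and \<open>|J_{f^l}|_F <= |W_l|_2 |df/dW_l|_F / |x|\<close>. At an interpolating
solution the residuals vanish, so the trace of the Hessian of the loss reduces to the
Gauss-Newton term \<open>(1/n) sum_i |df(x_i)/d theta|_F^2\<close>. Cauchy-Schwarz over the pairs \<open>(l, i)\<close>,
together with \<open>sum_k a_k^N <= (sum_k a_k)^N\<close>, combines the two bounds.\<close>

section \<open>Hadamard's inequality for Gram matrices\<close>

definition gram :: "nat \<Rightarrow> nat \<Rightarrow> (nat \<Rightarrow> nat \<Rightarrow> real) \<Rightarrow> real Matrix.mat" where
  "gram N a v = Matrix.mat N N (\<lambda>(r, s). \<Sum>j<a. v r j * v s j)"

lemma volratio_eq_gram: "volratio N a J = sqrt (Determinant.det (gram N a J))"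
  by (simp add: volratio_def gram_def)

lemma gram_eq_mult_transpose:
  "gram n a u = Matrix.mat n a (\<lambda>(r, j). u r j) * transpose_mat (Matrix.mat n a (\<lambda>(r, j). u r j))"
  by (rule eq_matI) (auto simp: gram_def scalar_prod_def atLeast0LessThan)

text \<open>No hypothesis on \<open>y\<close> is needed: for \<open>y = 0\<close> the coefficient \<open>c\<close> is \<open>0\<close>, since \<open>x / 0 = 0\<close>.\<close>

lemma sum_sq_sub_projection_le:
  fixes a :: nat and x y :: "nat \<Rightarrow> real"
  defines "c \<equiv> (\<Sum>j<a. x j * y j) / (\<Sum>j<a. y j * y j)"
  shows "(\<Sum>j<a. (x j - c * y j) * (x j - c * y j)) \<le> (\<Sum>j<a. x j * x j)"
proof -
  define b where "b = (\<Sum>j<a. x j * y j)"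
  define p where "p = (\<Sum>j<a. y j * y j)"
  have p0: "0 \<le> p" unfolding p_def by (intro sum_nonneg) auto
  have "(\<Sum>j<a. (x j - c * y j) * (x j - c * y j)) = (\<Sum>j<a. x j * x j) - 2 * c * b + c\<^sup>2 * p"
    by (simp add: algebra_simps power2_eq_square sum.distrib sum_subtractf sum_distrib_left b_def p_def)
  also have "\<dots> = (\<Sum>j<a. x j * x j) - b\<^sup>2 / p"
    using p0 by (cases "p = 0") (simp_all add: c_def b_def [symmetric] p_def [symmetric] power2_eq_square field_simps)
  also have "\<dots> \<le> (\<Sum>j<a. x j * x j)"
    using p0 by simp
  finally show ?thesis .
qed

lemma sum_mult_sub_projection_eq_0:
  fixes a :: nat and x y :: "nat \<Rightarrow> real"
  defines "c \<equiv> (\<Sum>j<a. x j * y j) / (\<Sum>j<a. y j * y j)"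
  shows "(\<Sum>j<a. y j * (x j - c * y j)) = 0"
proof (cases "(\<Sum>j<a. y j * y j) = 0")
  case True
  then have "\<forall>j<a. y j = 0"
    by (subst (asm) sum_nonneg_eq_0_iff) auto
  then show ?thesis by simp
next
  case False
  have "(\<Sum>j<a. y j * (x j - c * y j)) = (\<Sum>j<a. x j * y j) - c * (\<Sum>j<a. y j * y j)"
    by (simp add: algebra_simps sum_subtractf sum_distrib_left)
  then show ?thesis using False by (simp add: c_def)
qed

text \<open>Subtracting multiples of the first vector from the others is a unimodular row
operation on the Gram matrix.\<close>

lemma det_gram_sub_first:
  fixes v :: "nat \<Rightarrow> nat \<Rightarrow> real"
  assumes "e 0 = 0"
  shows "Determinant.det (gram (Suc N) a (\<lambda>r j. v r j - e r * v 0 j))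
       = Determinant.det (gram (Suc N) a v)"
proof -
  define V where "V = Matrix.mat (Suc N) a (\<lambda>(r, j). v r j)"
  define E where "E = Matrix.mat (Suc N) (Suc N) (\<lambda>(r, s). if r = s then 1 else if s = 0 then - e r else 0)"
  have E: "E \<in> carrier_mat (Suc N) (Suc N)" and V: "V \<in> carrier_mat (Suc N) a"
    by (simp_all add: E_def V_def)
  have EV: "E * V = Matrix.mat (Suc N) a (\<lambda>(r, j). v r j - e r * v 0 j)"
  proof (rule eq_matI)
    fix r j assume "r < dim_row (Matrix.mat (Suc N) a (\<lambda>(r, j). v r j - e r * v 0 j))"
      and "j < dim_col (Matrix.mat (Suc N) a (\<lambda>(r, j). v r j - e r * v 0 j))"
    then have r: "r < Suc N" and j: "j < a" by auto
    have "(E * V) $$ (r, j) = (\<Sum>k\<in>{0..<Suc N}. E $$ (r, k) * v k j)"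
      using r j E V by (auto simp: scalar_prod_def V_def)
    also have "\<dots> = (\<Sum>k\<in>{0..<Suc N}. (if k = r then v k j else 0) + (if k = 0 then - e r * v 0 j else 0))"
      by (rule sum.cong) (use r assms in \<open>auto simp: E_def\<close>)
    also have "\<dots> = v r j - e r * v 0 j"
      using r by (simp add: sum.distrib)
    finally show "(E * V) $$ (r, j) = Matrix.mat (Suc N) a (\<lambda>(r, j). v r j - e r * v 0 j) $$ (r, j)"
      using r j by simp
  qed (use E V in auto)
  have "gram (Suc N) a (\<lambda>r j. v r j - e r * v 0 j) = (E * V) * transpose_mat (E * V)"
    unfolding EV by (simp add: gram_eq_mult_transpose)
  also have "\<dots> = E * gram (Suc N) a v * transpose_mat E"
    unfolding gram_eq_mult_transpose V_def [symmetric] using E V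
    by (simp add: transpose_mult[of E "Suc N" "Suc N" V a] assoc_mult_mat[of _ "Suc N" "Suc N" _ a _ "Suc N"]
        assoc_mult_mat[of _ "Suc N" "Suc N" _ "Suc N" _ "Suc N"])
  finally have EGE: "gram (Suc N) a (\<lambda>r j. v r j - e r * v 0 j) = E * gram (Suc N) a v * transpose_mat E" .
  have "diag_mat E = replicate (Suc N) 1"
    by (rule nth_equalityI) (auto simp: diag_mat_def E_def nth_Cons' simp del: upt_Suc replicate_Suc)
  moreover have "Determinant.det E = prod_list (diag_mat E)"
    by (rule det_lower_triangular[of "Suc N"]) (auto simp: E_def)
  ultimately have "Determinant.det E = 1" by simp
  then show ?thesis
    unfolding EGE using E det_transpose[OF E] by (simp add: det_mult[of _ "Suc N"] gram_def)
qed

lemma det_gram_Suc_orthogonal: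
  fixes w :: "nat \<Rightarrow> nat \<Rightarrow> real"
  assumes orth: "\<And>s. (\<Sum>j<a. w 0 j * w (Suc s) j) = 0"
  shows "Determinant.det (gram (Suc N) a w)
       = (\<Sum>j<a. w 0 j * w 0 j) * Determinant.det (gram N a (\<lambda>r. w (Suc r)))"
proof -
  have orth': "(\<Sum>j<a. w (Suc s) j * w 0 j) = 0" for s
    using orth[of s] by (simp add: mult.commute)
  have blocks: "gram (Suc N) a w = four_block_mat (Matrix.mat 1 1 (\<lambda>_. \<Sum>j<a. w 0 j * w 0 j))
          (0\<^sub>m 1 N) (0\<^sub>m N 1) (gram N a (\<lambda>r. w (Suc r)))"
    by (rule eq_matI) (auto simp: gram_def four_block_mat_def orth orth' less_Suc_eq_0_disj)
  show ?thesis
    unfolding blocks by (subst det_four_block_mat_lower_left_zero_col) (auto simp: det_single gram_def)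
qed

lemma det_gram_le_prod:
  fixes v :: "nat \<Rightarrow> nat \<Rightarrow> real"
  shows "Determinant.det (gram N a v) \<le> (\<Prod>r<N. \<Sum>j<a. v r j * v r j)"
proof (induction N arbitrary: v)
  case 0
  show ?case by (simp add: gram_def det_dim_zero)
next
  case (Suc N)
  define p where "p = (\<Sum>j<a. v 0 j * v 0 j)"
  define e where "e r = (if r = 0 then 0 else (\<Sum>j<a. v r j * v 0 j) / p)" for r
  define w where "w r j = v r j - e r * v 0 j" for r j
  have p0: "0 \<le> p" unfolding p_def by (intro sum_nonneg) auto
  have w0: "w 0 = v 0" by (auto simp: w_def e_def)
  have orth: "(\<Sum>j<a. w 0 j * w (Suc s) j) = 0" for s
    using sum_mult_sub_projection_eq_0[where x = "v (Suc s)" and y = "v 0"]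
    by (simp add: w0 w_def e_def p_def)
  have "Determinant.det (gram (Suc N) a v) = Determinant.det (gram (Suc N) a w)"
    unfolding w_def by (rule det_gram_sub_first [symmetric]) (simp add: e_def)
  also have "\<dots> = p * Determinant.det (gram N a (\<lambda>r. w (Suc r)))"
    using orth by (simp add: det_gram_Suc_orthogonal w0 p_def)
  also have "\<dots> \<le> p * (\<Prod>r<N. \<Sum>j<a. w (Suc r) j * w (Suc r) j)"
    using p0 by (intro mult_left_mono Suc.IH)
  also have "\<dots> \<le> p * (\<Prod>r<N. \<Sum>j<a. v (Suc r) j * v (Suc r) j)"
  proof (intro mult_left_mono prod_mono conjI p0)
    fix r
    show "0 \<le> (\<Sum>j<a. w (Suc r) j * w (Suc r) j)" by (intro sum_nonneg) simp
    show "(\<Sum>j<a. w (Suc r) j * w (Suc r) j) \<le> (\<Sum>j<a. v (Suc r) j * v (Suc r) j)"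
      using sum_sq_sub_projection_le[where x = "v (Suc r)" and y = "v 0"]
      by (simp add: w_def e_def p_def)
  qed
  also have "\<dots> = (\<Prod>r<Suc N. \<Sum>j<a. v r j * v r j)"
    by (simp only: prod.lessThan_Suc_shift p_def)
  finally show ?case .
qed

lemma prod_le_mean_power:
  fixes y :: "'a \<Rightarrow> real"
  assumes "finite S" and nonneg: "\<And>r. r \<in> S \<Longrightarrow> 0 \<le> y r"
  shows "(\<Prod>r\<in>S. y r) \<le> ((\<Sum>r\<in>S. y r) / card S) ^ card S"
proof (cases "S = {}")
  case False
  define P where "P = (\<Prod>r\<in>S. y r)"
  have card: "card S > 0" using False assms(1) by (simp add: card_gt_0_iff)
  have mean0: "0 \<le> (\<Sum>r\<in>S. y r) / card S" using nonneg by (simp add: sum_nonneg)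
  have "P powr (1 / card S) \<le> (\<Sum>r\<in>S. y r) / card S"
    using arith_geom_mean[OF assms(1) False] nonneg by (simp add: P_def sum_divide_distrib)
  then have "(P powr (1 / card S)) ^ card S \<le> ((\<Sum>r\<in>S. y r) / card S) ^ card S"
    by (intro power_mono) simp_all
  moreover have "0 \<le> P" unfolding P_def using nonneg by (intro prod_nonneg) auto
  then have "(P powr (1 / card S)) ^ card S = P" if "P \<noteq> 0"
    using that card by (simp add: powr_power)
  ultimately show ?thesis
    using mean0 by (cases "P = 0") (auto simp: P_def)
qed simp

lemma sqrt_power_eq_powr_half:
  assumes "0 \<le> x" "0 < N"
  shows "sqrt (x ^ N) = x powr (real N / 2)"
proof -
  have "x powr (real N / 2) = sqrt (x powr real N)" by (rule powr_half_sqrt_powr[OF assms(1)])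
  also have "x powr real N = x ^ N" using assms by (simp add: powr_realpow')
  finally show ?thesis by (rule sym)
qed

lemma powr_half_divide_of_nat:
  "(x / real N) powr (real N / 2) = real N powr (- real N / 2) * x powr (real N / 2)"
proof -
  have "real N powr (- real N / 2) = inverse (real N powr (real N / 2))"
    using powr_minus[of "real N" "real N / 2"] by simp
  then show ?thesis unfolding powr_divide by (simp only: divide_inverse_commute)
qed

lemma volratio_le_fro_power:
  assumes "1 \<le> N"
  shows "volratio N a J \<le> real N powr (- real N / 2) * fro {..<N} {..<a} J ^ N"
proof -
  define S where "S = (\<Sum>r<N. \<Sum>j<a. (J r j)\<^sup>2)"
  have S0: "0 \<le> S" unfolding S_def by (intro sum_nonneg) auto
  have "Determinant.det (gram N a J) \<le> (S / N) ^ N"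
    using det_gram_le_prod[of N a J] prod_le_mean_power[of "{..<N}" "\<lambda>r. \<Sum>j<a. (J r j)\<^sup>2"]
    by (simp add: S_def power2_eq_square sum_nonneg)
  then have "volratio N a J \<le> sqrt ((S / N) ^ N)"
    unfolding volratio_eq_gram by (rule real_sqrt_le_mono)
  also have "\<dots> = (S / N) powr (real N / 2)"
    by (rule sqrt_power_eq_powr_half) (use S0 assms in auto)
  also have "\<dots> = real N powr (- real N / 2) * S powr (real N / 2)"
    by (rule powr_half_divide_of_nat)
  also have "S powr (real N / 2) = sqrt (S ^ N)"
    by (rule sqrt_power_eq_powr_half [symmetric]) (use S0 assms in auto)
  also have "\<dots> = fro {..<N} {..<a} J ^ N"
    by (simp add: fro_def S_def real_sqrt_power)
  finally show ?thesis .
qed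

lemma sum_dV_le_fro_power:
  assumes "1 \<le> N"
  shows "(\<Sum>l=1..L. dV \<sigma> m d L N n xs \<theta> l)
    \<le> (real N powr (- real N / 2) / real n) *
       (\<Sum>l=1..L. \<Sum>i=1..n. fro {..<N} {..<d l} (jac (f_from \<sigma> m d L \<theta> l) (layer_in \<sigma> m d \<theta> l (xs i))) ^ N)"
proof -
  have "(\<Sum>l=1..L. dV \<sigma> m d L N n xs \<theta> l)
      \<le> (\<Sum>l=1..L. (1 / real n) * (\<Sum>i=1..n. real N powr (- real N / 2) *
           fro {..<N} {..<d l} (jac (f_from \<sigma> m d L \<theta> l) (layer_in \<sigma> m d \<theta> l (xs i))) ^ N))"
    unfolding dV_def using assms by (intro sum_mono mult_left_mono volratio_le_fro_power) auto
  also have "\<dots> = (real N powr (- real N / 2) / real n) *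
       (\<Sum>l=1..L. \<Sum>i=1..n. fro {..<N} {..<d l} (jac (f_from \<sigma> m d L \<theta> l) (layer_in \<sigma> m d \<theta> l (xs i))) ^ N)"
    by (simp add: sum_distrib_left)
  finally show ?thesis .
qed

section \<open>Vector and matrix norms\<close>

lemma vnorm_eq_L2_set: "vnorm I x = L2_set x I"
  by (simp add: vnorm_def L2_set_def)

lemma vnorm_nonneg: "0 \<le> vnorm I x"
  by (simp add: vnorm_eq_L2_set)

lemma vnorm_power2: "(vnorm I x)\<^sup>2 = (\<Sum>j\<in>I. (x j)\<^sup>2)"
  unfolding vnorm_def by (intro real_sqrt_pow2 sum_nonneg) auto

lemma abs_le_vnorm:
  assumes "finite K" "k \<in> K"
  shows "\<bar>x k\<bar> \<le> vnorm K x"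
proof -
  have "\<bar>x k\<bar> = sqrt ((x k)\<^sup>2)" by simp
  also have "\<dots> \<le> vnorm K x"
    unfolding vnorm_def by (intro real_sqrt_le_mono member_le_sum assms) auto
  finally show ?thesis .
qed

lemma vnorm_mult: "vnorm I (\<lambda>j. t * x j) = \<bar>t\<bar> * vnorm I x"
  by (simp add: vnorm_def power_mult_distrib sum_distrib_left [symmetric] real_sqrt_mult)

lemma sum_mult_le_L2_set: "(\<Sum>i\<in>I. f i * g i) \<le> L2_set f I * L2_set g I"
proof -
  have "(\<Sum>i\<in>I. f i * g i) \<le> (\<Sum>i\<in>I. \<bar>f i\<bar> * \<bar>g i\<bar>)"
    by (intro sum_mono) (simp add: abs_mult [symmetric])
  also have "\<dots> \<le> L2_set f I * L2_set g I"
    by (rule L2_set_mult_ineq)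
  finally show ?thesis .
qed

lemma fro_nonneg: "0 \<le> fro K I A"
  unfolding fro_def by (intro real_sqrt_ge_zero sum_nonneg) auto

lemma vnorm_matvec_le_fro: "vnorm {..<k} (matvec k a A v) \<le> fro {..<k} {..<a} A * vnorm {..<a} v"
proof -
  have "(\<Sum>i<k. (matvec k a A v i)\<^sup>2) \<le> (\<Sum>i<k. (\<Sum>j<a. (A i j)\<^sup>2) * (\<Sum>j<a. (v j)\<^sup>2))"
    by (intro sum_mono) (simp add: matvec_def Cauchy_Schwarz_ineq_sum)
  also have "\<dots> = (\<Sum>i<k. \<Sum>j<a. (A i j)\<^sup>2) * (\<Sum>j<a. (v j)\<^sup>2)"
    by (simp add: sum_distrib_right)
  finally show ?thesis
    unfolding vnorm_def fro_def real_sqrt_mult [symmetric] by (rule real_sqrt_le_mono)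
qed

lemma matvec_mult: "matvec k a A (\<lambda>j. c * v j) = (\<lambda>i. c * matvec k a A v i)"
  by (auto simp: matvec_def sum_distrib_left algebra_simps)

lemma bdd_above_vnorm_matvec:
  "bdd_above ((\<lambda>v. vnorm {..<k} (matvec k a A v)) ` {v. (\<forall>j. a \<le> j \<longrightarrow> v j = 0) \<and> vnorm {..<a} v \<le> 1})"
proof (rule bdd_aboveI2)
  fix v assume "v \<in> {v. (\<forall>j. a \<le> j \<longrightarrow> v j = 0) \<and> vnorm {..<a} v \<le> 1}"
  then have "fro {..<k} {..<a} A * vnorm {..<a} v \<le> fro {..<k} {..<a} A"
    using fro_nonneg[of "{..<k}" "{..<a}" A] by (simp add: mult_left_le)
  then show "vnorm {..<k} (matvec k a A v) \<le> fro {..<k} {..<a} A"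
    using vnorm_matvec_le_fro[of k a A v] by linarith
qed

lemma vnorm_matvec_le_opnorm_unit:
  assumes "\<forall>j. a \<le> j \<longrightarrow> v j = 0" "vnorm {..<a} v \<le> 1"
  shows "vnorm {..<k} (matvec k a A v) \<le> opnorm k a A"
  unfolding opnorm_def by (rule cSup_upper [OF _ bdd_above_vnorm_matvec]) (use assms in auto)

lemma opnorm_nonneg: "0 \<le> opnorm k a A"
proof -
  have "vnorm {..<k} (matvec k a A (\<lambda>_. 0)) \<le> opnorm k a A"
    by (rule vnorm_matvec_le_opnorm_unit) (auto simp: vnorm_def)
  moreover have "matvec k a A (\<lambda>_. 0) = (\<lambda>_. 0)"
    by (auto simp: matvec_def)
  ultimately show ?thesis by (simp add: vnorm_def)
qed

lemma vnorm_matvec_le_opnorm: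
  assumes supp: "\<forall>j. a \<le> j \<longrightarrow> v j = 0"
  shows "vnorm {..<k} (matvec k a A v) \<le> opnorm k a A * vnorm {..<a} v"
proof (cases "vnorm {..<a} v = 0")
  case True
  then have "\<forall>j<a. v j = 0"
    by (simp add: vnorm_eq_L2_set L2_set_eq_0_iff)
  then have "matvec k a A v = (\<lambda>_. 0)"
    by (auto simp: matvec_def)
  then show ?thesis using True by (simp add: vnorm_def)
next
  case False
  define nv where "nv = vnorm {..<a} v"
  have nv: "0 < nv" using False vnorm_nonneg[of "{..<a}" v] by (simp add: nv_def)
  have "vnorm {..<a} (\<lambda>j. (1 / nv) * v j) \<le> 1"
    by (simp only: vnorm_mult) (use nv in \<open>simp add: nv_def\<close>)
  then have "vnorm {..<k} (matvec k a A (\<lambda>j. (1 / nv) * v j)) \<le> opnorm k a A"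
    by (intro vnorm_matvec_le_opnorm_unit) (use supp in auto)
  then have "(1 / nv) * vnorm {..<k} (matvec k a A v) \<le> opnorm k a A"
    by (simp only: matvec_mult vnorm_mult) (use nv in simp)
  then show ?thesis using nv by (simp add: nv_def [symmetric] field_simps)
qed

text \<open>With \<open>b = W^T y\<close>: \<open>|b|^2 = y . W b <= |y| |W|_2 |b|\<close>.\<close>

lemma sum_sq_vecmat_le_opnorm:
  fixes W :: "nat \<Rightarrow> nat \<Rightarrow> real"
  shows "(\<Sum>j<a. (\<Sum>k<mm. y k * W k j)\<^sup>2) \<le> (opnorm mm a W)\<^sup>2 * (\<Sum>k<mm. (y k)\<^sup>2)"
proof -
  define b where "b j = (if j < a then (\<Sum>k<mm. y k * W k j) else 0)" for j
  define nb where "nb = vnorm {..<a} b"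
  define ny where "ny = L2_set y {..<mm}"
  have nb0: "0 \<le> nb" and ny0: "0 \<le> ny" by (simp_all add: nb_def ny_def vnorm_nonneg)
  have "nb\<^sup>2 = (\<Sum>j<a. b j * (\<Sum>k<mm. y k * W k j))"
    unfolding nb_def vnorm_power2 by (intro sum.cong) (auto simp: b_def power2_eq_square)
  also have "\<dots> = (\<Sum>k<mm. y k * matvec mm a W b k)"
    by (simp add: matvec_def sum_distrib_left sum_distrib_right algebra_simps sum.swap[of _ "{..<a}"])
  also have "\<dots> \<le> ny * vnorm {..<mm} (matvec mm a W b)"
    unfolding ny_def vnorm_eq_L2_set by (rule sum_mult_le_L2_set)
  also have "\<dots> \<le> ny * (opnorm mm a W * nb)"
    unfolding nb_def by (intro mult_left_mono vnorm_matvec_le_opnorm ny0) (auto simp: b_def)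
  finally have "nb * nb \<le> (ny * opnorm mm a W) * nb"
    by (simp add: power2_eq_square mult_ac)
  then have "nb \<le> ny * opnorm mm a W"
    using nb0 ny0 opnorm_nonneg[of mm a W] by (cases "nb = 0") auto
  then have "nb\<^sup>2 \<le> (ny * opnorm mm a W)\<^sup>2"
    by (rule power_mono [OF _ nb0])
  then have "nb\<^sup>2 \<le> (opnorm mm a W)\<^sup>2 * ny\<^sup>2"
    by (simp add: power_mult_distrib mult.commute)
  moreover have "ny\<^sup>2 = (\<Sum>k<mm. (y k)\<^sup>2)"
    unfolding ny_def L2_set_def by (intro real_sqrt_pow2 sum_nonneg) auto
  moreover have "nb\<^sup>2 = (\<Sum>j<a. (\<Sum>k<mm. y k * W k j)\<^sup>2)"
    unfolding nb_def vnorm_power2 by (simp add: b_def)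
  ultimately show ?thesis by simp
qed

lemma fro_contraction_le:
  fixes J W :: "nat \<Rightarrow> nat \<Rightarrow> real" and D :: "nat \<Rightarrow> nat \<Rightarrow> nat \<Rightarrow> real"
  assumes J: "\<And>r j. r < N \<Longrightarrow> j < a \<Longrightarrow> J r j = (\<Sum>k<mm. \<Sum>i<a. D r k i * (W k j * x i / nx))"
    and nx: "nx = (\<Sum>i<a. (x i)\<^sup>2)"
  shows "fro {..<N} {..<a} J \<le> opnorm mm a W * sqrt (\<Sum>r<N. \<Sum>k<mm. \<Sum>i<a. (D r k i)\<^sup>2) / sqrt nx"
proof -
  define Q where "Q r k = (\<Sum>i<a. D r k i * x i)" for r k
  define op where "op = opnorm mm a W"
  have J': "J r j = (\<Sum>k<mm. Q r k * W k j) / nx" if "r < N" "j < a" for r j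
    using that by (simp add: J Q_def sum_divide_distrib sum_distrib_left sum_distrib_right algebra_simps)
  have Q: "(Q r k)\<^sup>2 \<le> (\<Sum>i<a. (D r k i)\<^sup>2) * nx" for r k
    unfolding Q_def nx by (rule Cauchy_Schwarz_ineq_sum)
  have row: "(\<Sum>j<a. (J r j)\<^sup>2) = (\<Sum>j<a. (\<Sum>k<mm. Q r k * W k j)\<^sup>2) / nx\<^sup>2" if "r < N" for r
  proof -
    have "(\<Sum>j<a. (J r j)\<^sup>2) = (\<Sum>j<a. (\<Sum>k<mm. Q r k * W k j)\<^sup>2 / nx\<^sup>2)"
      by (rule sum.cong) (simp_all add: J' that power_divide)
    then show ?thesis by (simp add: sum_divide_distrib)
  qed
  have "(\<Sum>r<N. \<Sum>j<a. (J r j)\<^sup>2) = (\<Sum>r<N. (\<Sum>j<a. (\<Sum>k<mm. Q r k * W k j)\<^sup>2) / nx\<^sup>2)"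
    by (intro sum.cong) (simp_all add: row)
  also have "\<dots> \<le> (\<Sum>r<N. op\<^sup>2 * (\<Sum>k<mm. (Q r k)\<^sup>2) / nx\<^sup>2)"
    unfolding op_def by (intro sum_mono divide_right_mono sum_sq_vecmat_le_opnorm) auto
  also have "\<dots> \<le> (\<Sum>r<N. op\<^sup>2 * (\<Sum>k<mm. (\<Sum>i<a. (D r k i)\<^sup>2) * nx) / nx\<^sup>2)"
    by (intro sum_mono divide_right_mono mult_left_mono Q) auto
  also have "\<dots> = op\<^sup>2 * (\<Sum>r<N. \<Sum>k<mm. \<Sum>i<a. (D r k i)\<^sup>2) / nx"
    by (cases "nx = 0") (simp_all add: sum_distrib_left sum_distrib_right sum_divide_distrib power2_eq_square mult.assoc)
  finally have "fro {..<N} {..<a} J \<le> sqrt (op\<^sup>2 * (\<Sum>r<N. \<Sum>k<mm. \<Sum>i<a. (D r k i)\<^sup>2) / nx)"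
    unfolding fro_def by (rule real_sqrt_le_mono)
  also have "\<dots> = op * sqrt (\<Sum>r<N. \<Sum>k<mm. \<Sum>i<a. (D r k i)\<^sup>2) / sqrt nx"
    using opnorm_nonneg[of mm a W] by (simp add: op_def real_sqrt_mult real_sqrt_divide)
  finally show ?thesis unfolding op_def .
qed

section \<open>Directional derivatives\<close>

lemma has_fderiv_line_remainder:
  assumes fd: "has_fderiv I K F x A" and K: "finite K" "k \<in> K"
    and supp: "\<forall>j. j \<notin> I \<longrightarrow> \<Delta> j = 0" and "0 < \<epsilon>"
  obtains s where "0 < s"
    and "\<And>t. \<bar>t\<bar> < s \<Longrightarrow> \<bar>F (\<lambda>j. x j + t * \<Delta> j) k - F x k - t * (\<Sum>j\<in>I. A k j * \<Delta> j)\<bar> \<le> \<epsilon> * \<bar>t\<bar>"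
proof -
  define nD where "nD = vnorm I \<Delta>"
  have nD0: "0 \<le> nD" unfolding nD_def by (rule vnorm_nonneg)
  have "0 < \<epsilon> / (nD + 1)" using \<open>0 < \<epsilon>\<close> nD0 by simp
  then obtain \<delta> where \<delta>: "0 < \<delta>" and rem: "\<And>h. \<forall>j. j \<notin> I \<longrightarrow> h j = 0 \<Longrightarrow> vnorm I h < \<delta> \<Longrightarrow>
      vnorm K (\<lambda>k. F (\<lambda>j. x j + h j) k - F x k - (\<Sum>j\<in>I. A k j * h j)) \<le> \<epsilon> / (nD + 1) * vnorm I h"
    using fd unfolding has_fderiv_def by meson
  show ?thesis
  proof
    show "0 < \<delta> / (nD + 1)" using \<delta> nD0 by simp
    fix t assume t: "\<bar>t\<bar> < \<delta> / (nD + 1)"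
    have tD: "vnorm I (\<lambda>j. t * \<Delta> j) = \<bar>t\<bar> * nD"
      unfolding nD_def by (rule vnorm_mult)
    have "\<bar>t\<bar> * nD < \<delta>"
      using t nD0 by (simp add: field_simps)
    then have "vnorm K (\<lambda>k. F (\<lambda>j. x j + t * \<Delta> j) k - F x k - (\<Sum>j\<in>I. A k j * (t * \<Delta> j)))
        \<le> \<epsilon> / (nD + 1) * (\<bar>t\<bar> * nD)"
      using rem[of "\<lambda>j. t * \<Delta> j"] supp tD by simp
    also have "\<dots> \<le> \<epsilon> * \<bar>t\<bar>"
      using \<open>0 < \<epsilon>\<close> nD0 by (simp add: field_simps mult_left_mono)
    finally show "\<bar>F (\<lambda>j. x j + t * \<Delta> j) k - F x k - t * (\<Sum>j\<in>I. A k j * \<Delta> j)\<bar> \<le> \<epsilon> * \<bar>t\<bar>"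
      using abs_le_vnorm[OF K, of "\<lambda>k. F (\<lambda>j. x j + t * \<Delta> j) k - F x k - (\<Sum>j\<in>I. A k j * (t * \<Delta> j))"]
      by (simp add: sum_distrib_left mult_ac)
  qed
qed

lemma has_fderiv_line_derivative_0:
  assumes fd: "has_fderiv I K F x A" and K: "finite K" "k \<in> K"
    and supp: "\<forall>j. j \<notin> I \<longrightarrow> \<Delta> j = 0"
  shows "((\<lambda>t. F (\<lambda>j. x j + t * \<Delta> j) k) has_real_derivative (\<Sum>j\<in>I. A k j * \<Delta> j)) (at 0)"
proof -
  define D where "D = (\<Sum>j\<in>I. A k j * \<Delta> j)"
  have "(\<lambda>t. (F (\<lambda>j. x j + t * \<Delta> j) k - F x k) / t) \<midarrow>0\<rightarrow> D"
  proof (rule LIM_I)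
    fix r :: real assume "0 < r"
    then obtain s where s: "0 < s"
      and rem: "\<And>t. \<bar>t\<bar> < s \<Longrightarrow> \<bar>F (\<lambda>j. x j + t * \<Delta> j) k - F x k - t * D\<bar> \<le> r / 2 * \<bar>t\<bar>"
      using has_fderiv_line_remainder[OF fd K supp, of "r / 2"] unfolding D_def by auto
    show "\<exists>s>0. \<forall>t. t \<noteq> 0 \<and> norm (t - 0) < s \<longrightarrow> norm ((F (\<lambda>j. x j + t * \<Delta> j) k - F x k) / t - D) < r"
    proof (intro exI[of _ s] conjI allI impI s)
      fix t :: real assume t: "t \<noteq> 0 \<and> norm (t - 0) < s"
      then have "(F (\<lambda>j. x j + t * \<Delta> j) k - F x k) / t - D = (F (\<lambda>j. x j + t * \<Delta> j) k - F x k - t * D) / t"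
        by (simp add: field_simps)
      also have "norm \<dots> \<le> r / 2"
        using rem[of t] t by (simp add: abs_divide divide_le_eq)
      finally show "norm ((F (\<lambda>j. x j + t * \<Delta> j) k - F x k) / t - D) < r"
        using \<open>0 < r\<close> by simp
    qed
  qed
  then show ?thesis unfolding D_def has_field_derivative_iff by simp
qed

lemma has_fderiv_line_derivative:
  assumes fd: "has_fderiv I K F (\<lambda>j. x j + t\<^sub>0 * \<Delta> j) A" and K: "finite K" "k \<in> K"
    and supp: "\<forall>j. j \<notin> I \<longrightarrow> \<Delta> j = 0"
  shows "((\<lambda>t. F (\<lambda>j. x j + t * \<Delta> j) k) has_real_derivative (\<Sum>j\<in>I. A k j * \<Delta> j)) (at t\<^sub>0)"
proof -
  have "((\<lambda>s. F (\<lambda>j. (x j + t\<^sub>0 * \<Delta> j) + s * \<Delta> j) k) has_real_derivative (\<Sum>j\<in>I. A k j * \<Delta> j)) (at 0)"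
    by (rule has_fderiv_line_derivative_0[OF fd K supp])
  moreover have "(\<lambda>s. F (\<lambda>j. (x j + t\<^sub>0 * \<Delta> j) + s * \<Delta> j) k) = (\<lambda>s. F (\<lambda>j. x j + (s + t\<^sub>0) * \<Delta> j) k)"
    by (simp add: algebra_simps)
  ultimately show ?thesis
    using DERIV_shift[of "\<lambda>t. F (\<lambda>j. x j + t * \<Delta> j) k" _ 0 t\<^sub>0] by simp
qed

section \<open>Layer inputs as weight perturbations\<close>

lemma run_add: "run \<sigma> m d \<theta> l (a + b) z = run \<sigma> m d \<theta> (l + a) b (run \<sigma> m d \<theta> l a z)"
  by (induction a arbitrary: l z) auto

lemma run_cong:
  assumes "\<And>l'. l \<le> l' \<Longrightarrow> l' < l + k \<Longrightarrow> Wof \<theta> l' = Wof \<theta>' l' \<and> bof \<theta> l' = bof \<theta>' l'"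
  shows "run \<sigma> m d \<theta> l k z = run \<sigma> m d \<theta>' l k z"
  using assms
proof (induction k arbitrary: l z)
  case (Suc k)
  then have "Wof \<theta> l = Wof \<theta>' l" "bof \<theta> l = bof \<theta>' l" by auto
  moreover have "run \<sigma> m d \<theta> (Suc l) k z' = run \<sigma> m d \<theta>' (Suc l) k z'" for z'
    by (rule Suc.IH) (use Suc.prems in auto)
  ultimately show ?case by simp
qed simp

lemma params_eq_image:
  "params L m d q = (\<lambda>(l, i, j). Wp l i j) ` (SIGMA l:{1..L}. {..<m l} \<times> {..<d l})
                  \<union> (\<lambda>(l, k). Bp l k) ` (SIGMA l:{1..L}. {..<q l})"
  unfolding params_def by force

lemma finite_params: "finite (params L m d q)"
  by (simp add: params_eq_image)

definition weight_dir :: "nat \<Rightarrow> nat \<Rightarrow> nat \<Rightarrow> (nat \<Rightarrow> nat \<Rightarrow> real) \<Rightarrow> param \<Rightarrow> real" where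
  "weight_dir l ml dl C p =
     (case p of Wp l' k a \<Rightarrow> if l' = l \<and> k < ml \<and> a < dl then C k a else 0 | Bp _ _ \<Rightarrow> 0)"

lemma weight_dir_outside_params:
  assumes "l \<in> {1..L}" "p \<notin> params L m d q"
  shows "weight_dir l (m l) (d l) C p = 0"
  using assms unfolding weight_dir_def params_def by (auto split: param.splits)

lemma sum_params_mult_weight_dir:
  assumes l: "l \<in> {1..L}"
  shows "(\<Sum>p\<in>params L m d q. g p * weight_dir l (m l) (d l) C p) = (\<Sum>k<m l. \<Sum>a<d l. g (Wp l k a) * C k a)"
proof -
  define S where "S = (\<lambda>(k, a). Wp l k a) ` ({..<m l} \<times> {..<d l})"
  have "S \<subseteq> params L m d q" using l by (auto simp: S_def params_def)
  then have "(\<Sum>p\<in>params L m d q. g p * weight_dir l (m l) (d l) C p) = (\<Sum>p\<in>S. g p * weight_dir l (m l) (d l) C p)"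
    by (intro sum.mono_neutral_right [OF finite_params]) (auto simp: S_def weight_dir_def split: param.splits)
  also have "\<dots> = (\<Sum>(k, a)\<in>{..<m l} \<times> {..<d l}. g (Wp l k a) * C k a)"
    unfolding S_def by (subst sum.reindex) (auto simp: inj_on_def weight_dir_def intro!: sum.cong)
  also have "\<dots> = (\<Sum>k<m l. \<Sum>a<d l. g (Wp l k a) * C k a)"
    by (simp add: sum.cartesian_product)
  finally show ?thesis .
qed

lemma matvec_rank_one_update:
  fixes W :: "nat \<Rightarrow> nat \<Rightarrow> real"
  assumes j: "j < dl" and nx: "nx = (\<Sum>a<dl. (x a)\<^sup>2)" "0 < nx"
  shows "matvec ml dl (\<lambda>i a. W i a + t * (if i < ml \<and> a < dl then W i j * x a / nx else 0)) x
       = matvec ml dl W (x(j := x j + t))"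
proof
  fix i
  show "matvec ml dl (\<lambda>i a. W i a + t * (if i < ml \<and> a < dl then W i j * x a / nx else 0)) x i
      = matvec ml dl W (x(j := x j + t)) i"
  proof (cases "i < ml")
    case True
    have "(\<Sum>a<dl. (W i a + t * (if i < ml \<and> a < dl then W i j * x a / nx else 0)) * x a)
        = (\<Sum>a<dl. W i a * x a) + t * W i j / nx * (\<Sum>a<dl. (x a)\<^sup>2)"
      using True by (simp add: algebra_simps power2_eq_square sum.distrib sum_distrib_left)
    also have "\<dots> = (\<Sum>a<dl. W i a * x a + (if a = j then W i j * t else 0))"
      using j nx by (simp add: sum.distrib mult.commute)
    also have "\<dots> = (\<Sum>a<dl. W i a * (x(j := x j + t)) a)"
      by (intro sum.cong) (auto simp: algebra_simps)
    finally show ?thesis using True by (simp add: matvec_def)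
  qed (simp add: matvec_def)
qed

lemma f_from_update_eq_net:
  assumes l: "l \<in> {1..L}" and j: "j < d l"
    and x: "x = layer_in \<sigma> m d \<theta> l x\<^sub>0"
    and nx: "nx = (\<Sum>a<d l. (x a)\<^sup>2)" "0 < nx"
  shows "f_from \<sigma> m d L \<theta> l (x(j := x j + t))
       = net \<sigma> m d L (\<lambda>p. \<theta> p + t * weight_dir l (m l) (d l) (\<lambda>k a. Wof \<theta> l k j * x a / nx) p) x\<^sub>0"
proof -
  define \<theta>' where "\<theta>' = (\<lambda>p. \<theta> p + t * weight_dir l (m l) (d l) (\<lambda>k a. Wof \<theta> l k j * x a / nx) p)"
  have W: "Wof \<theta>' l' = Wof \<theta> l'" if "l' \<noteq> l" for l'
    using that by (auto simp: \<theta>'_def Wof_def weight_dir_def)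
  have b: "bof \<theta>' l' = bof \<theta> l'" for l'
    by (auto simp: \<theta>'_def bof_def weight_dir_def)
  have Wl: "Wof \<theta>' l = (\<lambda>i a. Wof \<theta> l i a + t * (if i < m l \<and> a < d l then Wof \<theta> l i j * x a / nx else 0))"
    unfolding \<theta>'_def Wof_def weight_dir_def by auto
  obtain k where k: "Suc L - l = Suc k" using l by (metis Suc_diff_le atLeastAtMost_iff)
  have L: "L = (l - 1) + Suc k" and l1: "1 + (l - 1) = l" using l k by auto
  have "net \<sigma> m d L \<theta>' x\<^sub>0 = run \<sigma> m d \<theta>' l (Suc k) (run \<sigma> m d \<theta>' 1 (l - 1) x\<^sub>0)"
    unfolding net_def by (subst L) (simp only: run_add l1)
  also have "run \<sigma> m d \<theta>' 1 (l - 1) x\<^sub>0 = x"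
    unfolding x layer_in_def by (rule run_cong) (use W b in auto)
  also have "run \<sigma> m d \<theta>' l (Suc k) x
      = run \<sigma> m d \<theta> (Suc l) k (\<sigma> l (matvec (m l) (d l) (Wof \<theta> l) (x(j := x j + t))) (bof \<theta> l))"
    unfolding run.simps Wl b matvec_rank_one_update [OF j nx] by (rule run_cong) (use W b in auto)
  also have "\<dots> = f_from \<sigma> m d L \<theta> l (x(j := x j + t))"
    unfolding f_from_def k by simp
  finally show ?thesis by (simp add: \<theta>'_def)
qed

lemma jac_f_from_eq:
  assumes l: "l \<in> {1..L}" and j: "j < d l" and r: "r < N"
    and x: "x = layer_in \<sigma> m d \<theta> l x\<^sub>0"
    and nx: "nx = (\<Sum>a<d l. (x a)\<^sup>2)" "0 < nx"
    and fd: "has_fderiv (params L m d q) {..<N} (\<lambda>th. net \<sigma> m d L th x\<^sub>0) \<theta> D"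
  shows "jac (f_from \<sigma> m d L \<theta> l) x r j = (\<Sum>k<m l. \<Sum>a<d l. D r (Wp l k a) * (Wof \<theta> l k j * x a / nx))"
proof -
  define \<Delta> where "\<Delta> = weight_dir l (m l) (d l) (\<lambda>k a. Wof \<theta> l k j * x a / nx)"
  have "((\<lambda>t. net \<sigma> m d L (\<lambda>p. \<theta> p + t * \<Delta> p) x\<^sub>0 r) has_real_derivative
          (\<Sum>p\<in>params L m d q. D r p * \<Delta> p)) (at 0)"
    by (rule has_fderiv_line_derivative_0 [OF fd]) (use r l in \<open>auto simp: \<Delta>_def weight_dir_outside_params\<close>)
  then have "jac (f_from \<sigma> m d L \<theta> l) x r j = (\<Sum>p\<in>params L m d q. D r p * \<Delta> p)"
    unfolding jac_def f_from_update_eq_net [OF l j x nx] \<Delta>_def by (rule DERIV_imp_deriv)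
  also have "\<dots> = (\<Sum>k<m l. \<Sum>a<d l. D r (Wp l k a) * (Wof \<theta> l k j * x a / nx))"
    unfolding \<Delta>_def by (rule sum_params_mult_weight_dir [OF l])
  finally show ?thesis .
qed

lemma fro_jac_f_from_le:
  assumes l: "l \<in> {1..L}" and x: "x = layer_in \<sigma> m d \<theta> l x\<^sub>0" and nz: "\<exists>j<d l. x j \<noteq> 0"
    and fd: "has_fderiv (params L m d q) {..<N} (\<lambda>th. net \<sigma> m d L th x\<^sub>0) \<theta> D"
  shows "fro {..<N} {..<d l} (jac (f_from \<sigma> m d L \<theta> l) x)
       \<le> opnorm (m l) (d l) (Wof \<theta> l) / vnorm {..<d l} x *
         sqrt (\<Sum>r<N. \<Sum>k<m l. \<Sum>a<d l. (D r (Wp l k a))\<^sup>2)"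
proof -
  define nx where "nx = (\<Sum>a<d l. (x a)\<^sup>2)"
  have "0 < nx" using nz unfolding nx_def by (auto intro: sum_pos2)
  then have "fro {..<N} {..<d l} (jac (f_from \<sigma> m d L \<theta> l) x)
      \<le> opnorm (m l) (d l) (Wof \<theta> l) * sqrt (\<Sum>r<N. \<Sum>k<m l. \<Sum>a<d l. (D r (Wp l k a))\<^sup>2) / sqrt nx"
    by (intro fro_contraction_le [OF _ nx_def] jac_f_from_eq [OF l _ _ x nx_def _ fd])
  then show ?thesis by (simp add: vnorm_def nx_def)
qed

section \<open>Sharpness at an interpolating solution\<close>

lemma deriv_deriv_half_sum_sq:
  fixes \<phi> \<psi> :: "'i \<Rightarrow> 'k \<Rightarrow> real \<Rightarrow> real"
  assumes \<phi>: "\<And>i k t. i \<in> I \<Longrightarrow> k \<in> K \<Longrightarrow> (\<phi> i k has_real_derivative \<psi> i k t) (at t)"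
    and \<psi>: "\<And>i k. i \<in> I \<Longrightarrow> k \<in> K \<Longrightarrow> \<psi> i k differentiable (at 0)"
    and fit: "\<And>i k. i \<in> I \<Longrightarrow> k \<in> K \<Longrightarrow> \<phi> i k 0 = y i k"
  shows "deriv (deriv (\<lambda>t. c * (\<Sum>i\<in>I. (1/2) * (\<Sum>k\<in>K. (\<phi> i k t - y i k)\<^sup>2)))) 0
       = c * (\<Sum>i\<in>I. \<Sum>k\<in>K. (\<psi> i k 0)\<^sup>2)"
proof -
  define f' where "f' t = c * (\<Sum>i\<in>I. (1/2) * (\<Sum>k\<in>K. 2 * (\<phi> i k t - y i k) * \<psi> i k t))" for t
  have \<psi>': "(\<psi> i k has_real_derivative deriv (\<psi> i k) 0) (at 0)" if "i \<in> I" "k \<in> K" for i k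
    using \<psi> [OF that] by (simp add: DERIV_deriv_iff_real_differentiable)
  have "((\<lambda>t. c * (\<Sum>i\<in>I. (1/2) * (\<Sum>k\<in>K. (\<phi> i k t - y i k)\<^sup>2))) has_real_derivative f' t) (at t)" for t
    unfolding f'_def by (intro DERIV_cmult DERIV_sum) (auto intro!: derivative_eq_intros \<phi>)
  then have "deriv (\<lambda>t. c * (\<Sum>i\<in>I. (1/2) * (\<Sum>k\<in>K. (\<phi> i k t - y i k)\<^sup>2))) = f'"
    by (intro ext DERIV_imp_deriv)
  moreover have "(f' has_real_derivative
      c * (\<Sum>i\<in>I. (1/2) * (\<Sum>k\<in>K. 2 * (\<psi> i k 0 * \<psi> i k 0 + (\<phi> i k 0 - y i k) * deriv (\<psi> i k) 0)))) (at 0)"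
    unfolding f'_def by (intro DERIV_cmult DERIV_sum) (auto intro!: derivative_eq_intros \<phi> \<psi>')
  moreover have "(\<Sum>i\<in>I. (1/2) * (\<Sum>k\<in>K. 2 * (\<psi> i k 0 * \<psi> i k 0 + (\<phi> i k 0 - y i k) * deriv (\<psi> i k) 0)))
      = (\<Sum>i\<in>I. \<Sum>k\<in>K. (\<psi> i k 0)\<^sup>2)"
    by (intro sum.cong refl) (simp add: fit power2_eq_square sum_distrib_left [symmetric])
  ultimately show ?thesis by (simp add: DERIV_imp_deriv)
qed

lemma deriv_deriv_loss_update_eq:
  assumes D: "\<forall>x th. has_fderiv (params L m d q) {..<N} (\<lambda>th. net \<sigma> m d L th x) th (Dx x th)"
    and D2: "\<forall>x. \<exists>H. has_fderiv (params L m d q) ({..<N} \<times> params L m d q) (\<lambda>y (k, i). Dx x y k i) \<theta> H"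
    and interp: "\<forall>i\<in>{1..n}. \<forall>k<N. net \<sigma> m d L \<theta> (xs i) k = ys i k"
    and p: "p \<in> params L m d q"
  shows "deriv (deriv (\<lambda>t. loss \<sigma> m d L N n xs ys (\<theta>(p := \<theta> p + t)))) 0
       = (1 / real n) * (\<Sum>i=1..n. \<Sum>k<N. (Dx (xs i) \<theta> k p)\<^sup>2)"
proof -
  define e where "e p' = (if p' = p then 1 else (0::real))" for p'
  have supp: "\<forall>p'. p' \<notin> params L m d q \<longrightarrow> e p' = 0" using p by (auto simp: e_def)
  have sum_e: "(\<Sum>p'\<in>params L m d q. g p' * e p') = g p" for g :: "param \<Rightarrow> real"
  proof -
    have "(\<Sum>p'\<in>params L m d q. g p' * e p') = (\<Sum>p'\<in>params L m d q. if p' = p then g p' else 0)"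
      by (rule sum.cong) (auto simp: e_def)
    then show ?thesis using p finite_params by simp
  qed
  have "\<theta>(p := \<theta> p + t) = (\<lambda>p'. \<theta> p' + t * e p')" for t
    by (auto simp: e_def)
  then have loss: "(\<lambda>t. loss \<sigma> m d L N n xs ys (\<theta>(p := \<theta> p + t)))
      = (\<lambda>t. (1 / real n) * (\<Sum>i=1..n. (1/2) * (\<Sum>k<N. (net \<sigma> m d L (\<lambda>p'. \<theta> p' + t * e p') (xs i) k - ys i k)\<^sup>2)))"
    by (simp add: loss_def vnorm_power2)
  have "deriv (deriv (\<lambda>t. loss \<sigma> m d L N n xs ys (\<theta>(p := \<theta> p + t)))) 0
      = (1 / real n) * (\<Sum>i=1..n. \<Sum>k<N. (Dx (xs i) (\<lambda>p'. \<theta> p' + 0 * e p') k p)\<^sup>2)"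
    unfolding loss
  proof (rule deriv_deriv_half_sum_sq [where \<psi> = "\<lambda>i k t. Dx (xs i) (\<lambda>p'. \<theta> p' + t * e p') k p"])
    fix i k t assume "i \<in> {1..n}" "k \<in> {..<N}"
    show "((\<lambda>t. net \<sigma> m d L (\<lambda>p'. \<theta> p' + t * e p') (xs i) k) has_real_derivative
          Dx (xs i) (\<lambda>p'. \<theta> p' + t * e p') k p) (at t)"
      using has_fderiv_line_derivative [OF D [rule_format] _ _ supp] \<open>k \<in> {..<N}\<close> by (simp add: sum_e)
  next
    fix i k assume "i \<in> {1..n}" "k \<in> {..<N}"
    obtain H where H: "has_fderiv (params L m d q) ({..<N} \<times> params L m d q) (\<lambda>y (k', p'). Dx (xs i) y k' p') \<theta> H"
      using D2 by blast
    show "(\<lambda>t. Dx (xs i) (\<lambda>p'. \<theta> p' + t * e p') k p) differentiable (at 0)"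
      using has_fderiv_line_derivative_0 [OF H _ _ supp, of "(k, p)"] \<open>k \<in> {..<N}\<close> p finite_params
      by (auto simp: real_differentiable_def)
  qed (use interp in auto)
  then show ?thesis by simp
qed

lemma sum_sq_derivs_eq_sharpness:
  assumes D: "\<forall>x th. has_fderiv (params L m d q) {..<N} (\<lambda>th. net \<sigma> m d L th x) th (Dx x th)"
    and D2: "\<forall>x. \<exists>H. has_fderiv (params L m d q) ({..<N} \<times> params L m d q) (\<lambda>y (k, i). Dx x y k i) \<theta> H"
    and interp: "\<forall>i\<in>{1..n}. \<forall>k<N. net \<sigma> m d L \<theta> (xs i) k = ys i k"
  shows "(\<Sum>p\<in>params L m d q. \<Sum>i=1..n. \<Sum>k<N. (Dx (xs i) \<theta> k p)\<^sup>2) = real n * sharpness \<sigma> m d q L N n xs ys \<theta>"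
  using deriv_deriv_loss_update_eq [OF D D2 interp]
  by (cases "n = 0") (simp_all add: sharpness_def sum_distrib_left)

lemma sum_weight_params_le:
  fixes G :: "param \<Rightarrow> real"
  assumes "\<And>p. 0 \<le> G p"
  shows "(\<Sum>l=1..L. \<Sum>k<m l. \<Sum>a<d l. G (Wp l k a)) \<le> (\<Sum>p\<in>params L m d q. G p)"
proof -
  define T where "T = (SIGMA l:{1..L}. {..<m l} \<times> {..<d l})"
  have inj: "inj_on (\<lambda>(l, k, a). Wp l k a) T" by (auto simp: inj_on_def)
  have "(\<Sum>l=1..L. \<Sum>k<m l. \<Sum>a<d l. G (Wp l k a)) = (\<Sum>(l, k, a)\<in>T. G (Wp l k a))"
    unfolding T_def by (simp add: sum.Sigma sum.cartesian_product split_def)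
  also have "\<dots> = (\<Sum>p\<in>(\<lambda>(l, k, a). Wp l k a) ` T. G p)"
    by (rule sym, rule sum.reindex_cong [OF inj refl]) auto
  also have "\<dots> \<le> (\<Sum>p\<in>params L m d q. G p)"
    by (rule sum_mono2 [OF finite_params]) (auto simp: params_eq_image T_def assms)
  finally show ?thesis .
qed

lemma sum_sq_weight_derivs_le_sharpness:
  assumes D: "\<forall>x th. has_fderiv (params L m d q) {..<N} (\<lambda>th. net \<sigma> m d L th x) th (Dx x th)"
    and D2: "\<forall>x. \<exists>H. has_fderiv (params L m d q) ({..<N} \<times> params L m d q) (\<lambda>y (k, i). Dx x y k i) \<theta> H"
    and interp: "\<forall>i\<in>{1..n}. \<forall>k<N. net \<sigma> m d L \<theta> (xs i) k = ys i k"
  shows "(\<Sum>l=1..L. \<Sum>i=1..n. \<Sum>r<N. \<Sum>k<m l. \<Sum>a<d l. (Dx (xs i) \<theta> r (Wp l k a))\<^sup>2)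
       \<le> real n * sharpness \<sigma> m d q L N n xs ys \<theta>"
proof -
  have swap: "(\<Sum>i\<in>A. \<Sum>r\<in>B. \<Sum>k\<in>C. \<Sum>a\<in>E. F i r k a) = (\<Sum>k\<in>C. \<Sum>a\<in>E. \<Sum>i\<in>A. \<Sum>r\<in>B. F i r k a)"
    for A B C E and F :: "nat \<Rightarrow> nat \<Rightarrow> nat \<Rightarrow> nat \<Rightarrow> real"
  proof -
    have "(\<Sum>i\<in>A. \<Sum>r\<in>B. \<Sum>k\<in>C. \<Sum>a\<in>E. F i r k a) = (\<Sum>i\<in>A. \<Sum>k\<in>C. \<Sum>r\<in>B. \<Sum>a\<in>E. F i r k a)"
      by (rule sum.cong [OF refl], rule sum.swap)
    also have "\<dots> = (\<Sum>i\<in>A. \<Sum>k\<in>C. \<Sum>a\<in>E. \<Sum>r\<in>B. F i r k a)"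
      by (rule sum.cong [OF refl], rule sum.cong [OF refl], rule sum.swap)
    also have "\<dots> = (\<Sum>k\<in>C. \<Sum>i\<in>A. \<Sum>a\<in>E. \<Sum>r\<in>B. F i r k a)"
      by (rule sum.swap)
    also have "\<dots> = (\<Sum>k\<in>C. \<Sum>a\<in>E. \<Sum>i\<in>A. \<Sum>r\<in>B. F i r k a)"
      by (rule sum.cong [OF refl], rule sum.swap)
    finally show ?thesis .
  qed
  have "(\<Sum>l=1..L. \<Sum>i=1..n. \<Sum>r<N. \<Sum>k<m l. \<Sum>a<d l. (Dx (xs i) \<theta> r (Wp l k a))\<^sup>2)
      = (\<Sum>l=1..L. \<Sum>k<m l. \<Sum>a<d l. \<Sum>i=1..n. \<Sum>r<N. (Dx (xs i) \<theta> r (Wp l k a))\<^sup>2)"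
    by (rule sum.cong [OF refl], rule swap)
  also have "\<dots> \<le> (\<Sum>p\<in>params L m d q. \<Sum>i=1..n. \<Sum>r<N. (Dx (xs i) \<theta> r p)\<^sup>2)"
    by (rule sum_weight_params_le) (simp add: sum_nonneg)
  also have "\<dots> = real n * sharpness \<sigma> m d q L N n xs ys \<theta>"
    by (rule sum_sq_derivs_eq_sharpness [OF D D2 interp])
  finally show ?thesis .
qed

lemma sum_power_le_power_sum:
  fixes y :: "'a \<Rightarrow> real"
  assumes "finite S" "\<And>x. x \<in> S \<Longrightarrow> 0 \<le> y x" "0 < N"
  shows "(\<Sum>x\<in>S. (y x) ^ N) \<le> (\<Sum>x\<in>S. y x) ^ N"
proof (cases N)
  case (Suc M)
  have "(\<Sum>x\<in>S. (y x) ^ Suc M) = (\<Sum>x\<in>S. y x * y x ^ M)"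
    by simp
  also have "\<dots> \<le> (\<Sum>x\<in>S. y x * (\<Sum>x\<in>S. y x) ^ M)"
    using assms by (intro sum_mono mult_left_mono power_mono member_le_sum) auto
  also have "\<dots> = (\<Sum>x\<in>S. y x) ^ Suc M"
    by (simp add: sum_distrib_right)
  finally show ?thesis using Suc by simp
qed (use assms in simp)

lemma sum_power_le_L2_mult_powr:
  fixes f c g :: "'a \<Rightarrow> real"
  assumes "finite I" "0 < N"
    and f: "\<And>i. i \<in> I \<Longrightarrow> 0 \<le> f i \<and> f i \<le> c i * g i"
    and cg: "\<And>i. i \<in> I \<Longrightarrow> 0 \<le> c i \<and> 0 \<le> g i"
    and Q: "(\<Sum>i\<in>I. (g i)\<^sup>2) \<le> Q"
  shows "(\<Sum>i\<in>I. f i ^ N) \<le> sqrt (\<Sum>i\<in>I. c i ^ (2 * N)) * Q powr (real N / 2)"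
proof -
  have pow: "x ^ (2 * N) = (x ^ N)\<^sup>2" "(x ^ N)\<^sup>2 = (x\<^sup>2) ^ N" for x :: real
    by (metis power_mult mult.commute)+
  have "0 \<le> (\<Sum>i\<in>I. (g i)\<^sup>2)" by (simp add: sum_nonneg)
  with Q have Q0: "0 \<le> Q" by linarith
  have "(\<Sum>i\<in>I. (g i ^ N)\<^sup>2) \<le> (\<Sum>i\<in>I. (g i)\<^sup>2) ^ N"
    unfolding pow(2) by (rule sum_power_le_power_sum) (use assms in auto)
  also have "\<dots> \<le> Q ^ N"
    by (intro power_mono Q sum_nonneg) auto
  finally have "L2_set (\<lambda>i. g i ^ N) I \<le> sqrt (Q ^ N)"
    unfolding L2_set_def by (rule real_sqrt_le_mono)
  also have "\<dots> = Q powr (real N / 2)"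
    by (rule sqrt_power_eq_powr_half [OF Q0 \<open>0 < N\<close>])
  finally have g: "L2_set (\<lambda>i. g i ^ N) I \<le> Q powr (real N / 2)" .
  have "(\<Sum>i\<in>I. f i ^ N) \<le> (\<Sum>i\<in>I. c i ^ N * g i ^ N)"
    using f by (intro sum_mono) (auto simp: power_mult_distrib [symmetric] intro: power_mono)
  also have "\<dots> \<le> L2_set (\<lambda>i. c i ^ N) I * L2_set (\<lambda>i. g i ^ N) I"
    by (rule sum_mult_le_L2_set)
  also have "\<dots> \<le> L2_set (\<lambda>i. c i ^ N) I * Q powr (real N / 2)"
    by (intro mult_left_mono g L2_set_nonneg)
  also have "L2_set (\<lambda>i. c i ^ N) I = sqrt (\<Sum>i\<in>I. c i ^ (2 * N))"
    unfolding L2_set_def pow(1) ..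
  finally show ?thesis .
qed

lemma sum_fro_jac_power_le_sharpness:
  assumes N_pos: "1 \<le> N"
    and f_twice: "\<forall>x. twice_fdiff (params L m d q) {..<N} (\<lambda>th. net \<sigma> m d L th x)"
    and nonzero: "\<forall>l\<in>{1..L}. \<forall>i\<in>{1..n}. \<exists>j<d l. layer_in \<sigma> m d \<theta> l (xs i) j \<noteq> 0"
    and interp: "\<forall>i\<in>{1..n}. \<forall>k<N. net \<sigma> m d L \<theta> (xs i) k = ys i k"
  shows "(real N powr (- real N / 2) / real n) *
           (\<Sum>l=1..L. \<Sum>i=1..n.
              (fro {..<N} {..<d l} (jac (f_from \<sigma> m d L \<theta> l) (layer_in \<sigma> m d \<theta> l (xs i)))) ^ N)
         \<le> (1 / real n) *
           sqrt (\<Sum>l=1..L. \<Sum>i=1..n.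
              opnorm (m l) (d l) (Wof \<theta> l) ^ (2 * N) / vnorm {..<d l} (layer_in \<sigma> m d \<theta> l (xs i)) ^ (2 * N)) *
           (real n * sharpness \<sigma> m d q L N n xs ys \<theta> / real N) powr (real N / 2)"
proof -
  obtain Dx where D: "\<forall>x th. has_fderiv (params L m d q) {..<N} (\<lambda>th. net \<sigma> m d L th x) th (Dx x th)"
    and D2: "\<forall>x th. \<exists>H. has_fderiv (params L m d q) ({..<N} \<times> params L m d q) (\<lambda>y (k, i). Dx x y k i) th H"
    using f_twice unfolding twice_fdiff_def by metis
  define J where "J l i = fro {..<N} {..<d l} (jac (f_from \<sigma> m d L \<theta> l) (layer_in \<sigma> m d \<theta> l (xs i)))" for l i
  define c where "c l i = opnorm (m l) (d l) (Wof \<theta> l) / vnorm {..<d l} (layer_in \<sigma> m d \<theta> l (xs i))" for l i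
  define g where "g l i = sqrt (\<Sum>r<N. \<Sum>k<m l. \<Sum>a<d l. (Dx (xs i) \<theta> r (Wp l k a))\<^sup>2)" for l i
  define S where "S = sharpness \<sigma> m d q L N n xs ys \<theta>"
  have nonneg: "0 \<le> J l i" "0 \<le> c l i" "0 \<le> g l i" for l i
    by (simp_all add: J_def c_def g_def fro_nonneg opnorm_nonneg vnorm_nonneg sum_nonneg)
  have J: "J l i \<le> c l i * g l i" if "l \<in> {1..L}" "i \<in> {1..n}" for l i
    unfolding J_def c_def g_def using that nonzero D by (intro fro_jac_f_from_le) auto
  have "(\<Sum>l=1..L. \<Sum>i=1..n. (g l i)\<^sup>2) \<le> real n * S"
    unfolding g_def S_def using sum_sq_weight_derivs_le_sharpness [OF D] D2 interp
    by (simp add: sum_nonneg)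
  then have "(\<Sum>x\<in>{1..L} \<times> {1..n}. (case x of (l, i) \<Rightarrow> J l i) ^ N)
      \<le> sqrt (\<Sum>x\<in>{1..L} \<times> {1..n}. (case x of (l, i) \<Rightarrow> c l i) ^ (2 * N)) * (real n * S) powr (real N / 2)"
    using J N_pos
    by (intro sum_power_le_L2_mult_powr [where g = "\<lambda>(l, i). g l i"])
       (auto simp: sum.cartesian_product split_def nonneg)
  then have "(\<Sum>l=1..L. \<Sum>i=1..n. J l i ^ N)
      \<le> sqrt (\<Sum>l=1..L. \<Sum>i=1..n. c l i ^ (2 * N)) * (real n * S) powr (real N / 2)"
    by (simp add: sum.cartesian_product split_def)
  from mult_left_mono [OF this, of "real N powr (- real N / 2) / real n"] show ?thesis
    by (simp add: powr_half_divide_of_nat J_def c_def S_def power_divide mult_ac)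
qed

theorem proposition2:
  fixes L N n :: nat
    and d m q :: "nat \<Rightarrow> nat"
    and \<sigma> :: "nat \<Rightarrow> (nat \<Rightarrow> real) \<Rightarrow> (nat \<Rightarrow> real) \<Rightarrow> (nat \<Rightarrow> real)"
    and xs ys :: "nat \<Rightarrow> nat \<Rightarrow> real"
    and \<theta> :: "param \<Rightarrow> real"
  assumes L_pos: "1 \<le> L"
    and N_pos: "1 \<le> N"
    and out_dim: "d (Suc L) = N"
    and sigma_diff: "\<forall>l\<in>{1..L}. \<forall>b u. (\<forall>j. m l \<le> j \<longrightarrow> u j = 0) \<longrightarrow>
                       (\<exists>A. has_fderiv {..<m l} {..<d (Suc l)} (\<lambda>v. \<sigma> l v b) u A)"
    and f_twice: "\<forall>x. twice_fdiff (params L m d q) {..<N} (\<lambda>th. net \<sigma> m d L th x)"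
    and nonzero: "\<forall>l\<in>{1..L}. \<forall>i\<in>{1..n}. \<exists>j<d l. layer_in \<sigma> m d \<theta> l (xs i) j \<noteq> 0"
    and interp: "\<forall>i\<in>{1..n}. \<forall>k<N. net \<sigma> m d L \<theta> (xs i) k = ys i k"
  shows "(\<Sum>l=1..L. dV \<sigma> m d L N n xs \<theta> l)
           \<le> (real N powr (- real N / 2) / real n) *
              (\<Sum>l=1..L. \<Sum>i=1..n.
                 (fro {..<N} {..<d l} (jac (f_from \<sigma> m d L \<theta> l) (layer_in \<sigma> m d \<theta> l (xs i)))) ^ N)
       \<and> (real N powr (- real N / 2) / real n) *
              (\<Sum>l=1..L. \<Sum>i=1..n.
                 (fro {..<N} {..<d l} (jac (f_from \<sigma> m d L \<theta> l) (layer_in \<sigma> m d \<theta> l (xs i)))) ^ N)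
           \<le> (1 / real n) *
              sqrt (\<Sum>l=1..L. \<Sum>i=1..n.
                 opnorm (m l) (d l) (Wof \<theta> l) ^ (2 * N) /
                 vnorm {..<d l} (layer_in \<sigma> m d \<theta> l (xs i)) ^ (2 * N)) *
              (real n * sharpness \<sigma> m d q L N n xs ys \<theta> / real N) powr (real N / 2)"
  using sum_dV_le_fro_power [OF N_pos] sum_fro_jac_power_le_sharpness [OF N_pos f_twice nonzero interp]
  by (rule conjI)

end
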